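(* Assume the setting in the context. For any reward function $R:\Delta_\Sigma\times\Delta_\Sigma\to\mathbb{R}$ and any hypotheses $h_A:\Sigma_A\to\Delta_\Sigma$, $h_B:\Sigma_B\to\Delta_\Sigma$, the expected $f$-mutual information gain satisfies $$\mathbb{E}\big[MIG^f(R(h_A,h_B))_{|S_A,S_B}\big]=\sum_{x_A,x_B}\Pr[X_A=x_A,X_B=x_B]\,R(h_A(x_A),h_B(x_B))-\sum_{x_A,x_B}\Pr[X_A=x_A]\Pr[X_B=x_B]\,f^\star\big(R(h_A(x_A),h_B(x_B))\big)\le MI^f(X_A;X_B),$$ with equality if and only if $R(h_A(x_A),h_B(x_B))\in\partial f(K(x_A,x_B))$ for every $(x_A,x_B)\in\Sigma_A\times\Sigma_B$. In particular, the maximum of the expected gain over all $R,h_A,h_B$ (whenever attained, e.g. when $|\Sigma|\ge 2$) equals $MI^f(X_A;X_B)$ and is attained exactly by those triples satisfying this subdifferential condition.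
   Context: Let $\Sigma_A,\Sigma_B,\Sigma$ be finite nonempty sets and $(X_A,X_B)$ a random pair with values in $\Sigma_A\times\Sigma_B$ with $\Pr[X_A=x_A]>0$, $\Pr[X_B=x_B]>0$ for all $x_A,x_B$. $\Delta_\Sigma$ is the set of probability vectors on $\Sigma$. $K(x_A,x_B):=\frac{\Pr[X_A=x_A,X_B=x_B]}{\Pr[X_A=x_A]\Pr[X_B=x_B]}$. Let $f:[0,\infty)\to\mathbb{R}$ be convex with $f(1)=0$; $f^\star(u):=\sup_{t\ge 0}(tu-f(t))$ is its convex conjugate and $\partial f(t)$ its subdifferential at $t$. The $f$-mutual information is $MI^f(X_A;X_B):=\sum_{x_A,x_B}\Pr[X_A=x_A]\Pr[X_B=x_B]\,f(K(x_A,x_B))$, i.e. the $f$-divergence between the joint distribution of $(X_A,X_B)$ and the product of its marginals. Sampling model: $\mathcal{L}_A,\mathcal{L}_B$ are finite index sets with $\mathcal{L}_A\cap\mathcal{L}_B\neq\emptyset$ and with at least one pair $(\ell_A,\ell_B)\in\mathcal{L}_A\times\mathcal{L}_B$, $\ell_A\ne\ell_B$; for each $\ell\in\mathcal{L}_A\cup\mathcal{L}_B$ an independent copy $(x_A^\ell,x_B^\ell)$ of $(X_A,X_B)$ is drawn, and one observes $S_A=\{x_A^\ell\}_{\ell\in\mathcal{L}_A}$, $S_B=\{x_B^\ell\}_{\ell\in\mathcal{L}_B}$. The $f$-mutual information gain is $$MIG^f(R(h_A,h_B))_{|S_A,S_B}:=\frac{1}{|\mathcal{L}_A\cap\mathcal{L}_B|}\sum_{\ell\in\mathcal{L}_A\cap\mathcal{L}_B}R(h_A(x_A^\ell),h_B(x_B^\ell))-\frac{1}{N}\sum_{\ell_A\in\mathcal{L}_A,\ell_B\in\mathcal{L}_B,\ell_A\ne\ell_B}f^\star\big(R(h_A(x_A^{\ell_A}),h_B(x_B^{\ell_B}))\big),$$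 where $N=|\mathcal{L}_A||\mathcal{L}_B|-|\mathcal{L}_A\cap\mathcal{L}_B|$ is the number of such pairs $(\ell_A,\ell_B)$. *)

theory Defs
  imports "HOL-Probability.Probability"
begin

text \<open>Convex conjugate, f*(u) = sup over t \<ge> 0 of (t u - f t); it may be +\<infinity>, hence ereal.\<close>
definition fstar :: "(real \<Rightarrow> real) \<Rightarrow> real \<Rightarrow> ereal" where
  "fstar f u = (SUP t\<in>{0..}. ereal (t * u - f t))"

definition subdiff :: "(real \<Rightarrow> real) \<Rightarrow> real \<Rightarrow> real set" where
  "subdiff f t = {u. \<forall>s\<ge>0. f t + u * (s - t) \<le> f s}"

definition pA :: "('a \<times> 'b) pmf \<Rightarrow> 'a \<Rightarrow> real" where
  "pA X xa = pmf (map_pmf fst X) xa"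

definition pB :: "('a \<times> 'b) pmf \<Rightarrow> 'b \<Rightarrow> real" where
  "pB X xb = pmf (map_pmf snd X) xb"

definition Kratio :: "('a \<times> 'b) pmf \<Rightarrow> 'a \<Rightarrow> 'b \<Rightarrow> real" where
  "Kratio X xa xb = pmf X (xa, xb) / (pA X xa * pB X xb)"

definition fMI :: "(real \<Rightarrow> real) \<Rightarrow> ('a::finite \<times> 'b::finite) pmf \<Rightarrow> real" where
  "fMI f X = (\<Sum>xa\<in>UNIV. \<Sum>xb\<in>UNIV. pA X xa * pB X xb * f (Kratio X xa xb))"

definition MIG ::
  "(real \<Rightarrow> real) \<Rightarrow> ('c pmf \<Rightarrow> 'c pmf \<Rightarrow> real) \<Rightarrow> ('a \<Rightarrow> 'c pmf) \<Rightarrow> ('b \<Rightarrow> 'c pmf)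
    \<Rightarrow> 'l set \<Rightarrow> 'l set \<Rightarrow> ('l \<Rightarrow> 'a \<times> 'b) \<Rightarrow> ereal" where
  "MIG f R hA hB LA LB s =
     ereal ((1 / real (card (LA \<inter> LB))) *
            (\<Sum>l\<in>LA \<inter> LB. R (hA (fst (s l))) (hB (snd (s l)))))
     - ereal (1 / real (card LA * card LB - card (LA \<inter> LB))) *
       (\<Sum>(la, lb)\<in>{(la, lb). la \<in> LA \<and> lb \<in> LB \<and> la \<noteq> lb}.
          fstar f (R (hA (fst (s la))) (hB (snd (s lb)))))"

text \<open>Expectation of MIG over independent copies (x_A^l, x_B^l), l \<in> LA \<union> LB, of X.\<close>
definition expected_MIG ::
  "(real \<Rightarrow> real) \<Rightarrow> ('a::finite \<times> 'b::finite) pmf \<Rightarrow> ('c pmf \<Rightarrow> 'c pmf \<Rightarrow> real)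
    \<Rightarrow> ('a \<Rightarrow> 'c pmf) \<Rightarrow> ('b \<Rightarrow> 'c pmf) \<Rightarrow> 'l set \<Rightarrow> 'l set \<Rightarrow> ereal" where
  "expected_MIG f X R hA hB LA LB =
     (\<Sum>s\<in>PiE (LA \<union> LB) (\<lambda>_. UNIV).
        ereal (\<Prod>l\<in>LA \<union> LB. pmf X (s l)) * MIG f R hA hB LA LB s)"

end

theory Submission
  imports Defs
begin

(*
  Each sampled pair is distributed like X, and two pairs with distinct indices are independent, so
  x_A at one index together with x_B at a different index is distributed like the product of the
  marginals. By linearity the expected gain is E_X[R] - E_{pA x pB}[f*(R)]. Writing
  pmf X (a, b) = pA a * pB b * K(a, b), the distance to the f-mutual information is the
  pA pB-average of the Fenchel-Young gap f*(R) - (K R - f K), which is nonnegative and vanishes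
  exactly when R is a subgradient of f at K. If f*(R) = \<infinity> somewhere, some sample of positive
  probability has infinite penalty, so both sides are -\<infinity>.
*)

lemma fenchel_young: "t \<ge> 0 \<Longrightarrow> ereal (t * u - f t) \<le> fstar f u"
  unfolding fstar_def by (rule SUP_upper) auto

lemma fstar_neq_MInfty: "fstar f u \<noteq> -\<infinity>"
  using fenchel_young[of 0 u f] by auto

lemma fstar_eq_iff_subdiff:
  assumes "t \<ge> 0"
  shows "fstar f u = ereal (t * u - f t) \<longleftrightarrow> u \<in> subdiff f t"
proof
  assume eq: "fstar f u = ereal (t * u - f t)"
  show "u \<in> subdiff f t"
    unfolding subdiff_def
  proof safe
    fix s :: real
    assume "s \<ge> 0"
    from fenchel_young[OF this, of u f] eq have "s * u - f s \<le> t * u - f t" by simp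
    then show "f t + u * (s - t) \<le> f s" by (simp add: algebra_simps)
  qed
next
  assume "u \<in> subdiff f t"
  then have "fstar f u \<le> ereal (t * u - f t)"
    unfolding fstar_def subdiff_def by (intro SUP_least) (auto simp: algebra_simps)
  with fenchel_young[OF assms] show "fstar f u = ereal (t * u - f t)" by (intro antisym)
qed

lemma sum_PiE_prod_pmf_eq_expectation:
  fixes p :: "'i \<Rightarrow> 'x::finite pmf"
  assumes "finite I"
  shows "(\<Sum>s\<in>PiE I (\<lambda>_. UNIV). (\<Prod>i\<in>I. pmf (p i) (s i)) * g s)
       = measure_pmf.expectation (Pi_pmf I undefined p) g"
proof -
  have "measure_pmf.expectation (Pi_pmf I undefined p) g
      = (\<Sum>s\<in>PiE I (\<lambda>_. UNIV). g s * pmf (Pi_pmf I undefined p) s)"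
    using set_Pi_pmf_subset[OF assms, of undefined p]
    by (intro integral_measure_pmf_real[OF finite_PiE[OF assms]]) (auto simp: PiE_def extensional_def)
  also have "\<dots> = (\<Sum>s\<in>PiE I (\<lambda>_. UNIV). (\<Prod>i\<in>I. pmf (p i) (s i)) * g s)"
    using assms by (intro sum.cong) (auto simp: pmf_Pi' PiE_def extensional_def)
  finally show ?thesis by simp
qed

lemma map_Pi_pmf_two_components:
  assumes "finite I" "i \<in> I" "j \<in> I" "i \<noteq> j"
  shows "map_pmf (\<lambda>s. (s i, s j)) (Pi_pmf I d p) = pair_pmf (p i) (p j)"
proof -
  have "Pi_pmf I d p = map_pmf (\<lambda>(y, s). s(i := y)) (pair_pmf (p i) (Pi_pmf (I - {i}) d p))"
    using assms Pi_pmf_insert[of "I - {i}" i d p] by (simp add: insert_absorb)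
  then have "map_pmf (\<lambda>s. (s i, s j)) (Pi_pmf I d p)
      = pair_pmf (p i) (map_pmf (\<lambda>s. s j) (Pi_pmf (I - {i}) d p))"
    using assms by (simp add: pmf.map_comp o_def case_prod_unfold pair_map_pmf2 apsnd_def map_prod_def)
  also have "\<dots> = pair_pmf (p i) (p j)"
    using assms by (simp add: Pi_pmf_component)
  finally show ?thesis .
qed

lemma sum_PiE_prod_pmf_component:
  fixes p :: "'i \<Rightarrow> 'x::finite pmf"
  assumes "finite I" "l \<in> I"
  shows "(\<Sum>s\<in>PiE I (\<lambda>_. UNIV). (\<Prod>i\<in>I. pmf (p i) (s i)) * g (s l)) = (\<Sum>x\<in>UNIV. pmf (p l) x * g x)"
proof -
  have "(\<Sum>s\<in>PiE I (\<lambda>_. UNIV). (\<Prod>i\<in>I. pmf (p i) (s i)) * g (s l))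
      = measure_pmf.expectation (map_pmf (\<lambda>s. s l) (Pi_pmf I undefined p)) g"
    using assms by (simp add: sum_PiE_prod_pmf_eq_expectation)
  also have "\<dots> = (\<Sum>x\<in>UNIV. g x * pmf (p l) x)"
    using assms by (simp add: Pi_pmf_component integral_measure_pmf_real[of UNIV])
  finally show ?thesis
    by (simp add: mult.commute)
qed

lemma sum_PiE_prod_pmf_two_components:
  fixes p :: "'i \<Rightarrow> 'x::finite pmf"
  assumes "finite I" "i \<in> I" "j \<in> I" "i \<noteq> j"
  shows "(\<Sum>s\<in>PiE I (\<lambda>_. UNIV). (\<Prod>k\<in>I. pmf (p k) (s k)) * h (s i) (s j))
       = (\<Sum>x\<in>UNIV. \<Sum>y\<in>UNIV. pmf (p i) x * pmf (p j) y * h x y)"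
proof -
  have "(\<Sum>s\<in>PiE I (\<lambda>_. UNIV). (\<Prod>k\<in>I. pmf (p k) (s k)) * h (s i) (s j))
      = measure_pmf.expectation (map_pmf (\<lambda>s. (s i, s j)) (Pi_pmf I undefined p)) (case_prod h)"
    using assms by (simp add: sum_PiE_prod_pmf_eq_expectation)
  also have "\<dots> = (\<Sum>z\<in>UNIV. case_prod h z * pmf (pair_pmf (p i) (p j)) z)"
    using assms by (simp add: map_Pi_pmf_two_components integral_measure_pmf_real[of UNIV])
  also have "\<dots> = (\<Sum>x\<in>UNIV. \<Sum>y\<in>UNIV. pmf (p i) x * pmf (p j) y * h x y)"
    by (simp add: UNIV_Times_UNIV[symmetric] sum.cartesian_product del: UNIV_Times_UNIV)
       (intro sum.cong, auto simp: pmf_pair)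
  finally show ?thesis .
qed

lemma sum_pmf_comp_eq_map_pmf:
  fixes X :: "'x::finite pmf" and g :: "'x \<Rightarrow> 'y::finite"
  shows "(\<Sum>x\<in>UNIV. pmf X x * G (g x)) = (\<Sum>y\<in>UNIV. pmf (map_pmf g X) y * G y)"
proof -
  have "(\<Sum>x\<in>UNIV. pmf X x * G (g x)) = measure_pmf.expectation X (\<lambda>x. G (g x))"
    by (subst integral_measure_pmf_real[of UNIV]) (auto simp: mult.commute)
  also have "\<dots> = measure_pmf.expectation (map_pmf g X) G" by simp
  also have "\<dots> = (\<Sum>y\<in>UNIV. pmf (map_pmf g X) y * G y)"
    by (subst integral_measure_pmf_real[of UNIV]) (auto simp: mult.commute)
  finally show ?thesis .
qed

lemma sum_weighted_average_const:
  assumes "finite J" "J \<noteq> {}" "\<And>j. j \<in> J \<Longrightarrow> (\<Sum>s\<in>S. w s * g j s) = c"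
  shows "(\<Sum>s\<in>S. w s * (1 / real (card J) * (\<Sum>j\<in>J. g j s))) = (c :: real)"
proof -
  have "(\<Sum>s\<in>S. w s * (1 / real (card J) * (\<Sum>j\<in>J. g j s)))
      = 1 / real (card J) * (\<Sum>j\<in>J. \<Sum>s\<in>S. w s * g j s)"
    by (simp add: sum_distrib_left mult.left_commute sum.swap[of _ J S])
  also have "\<dots> = c"
    using assms by simp
  finally show ?thesis .
qed

lemma card_off_diagonal:
  assumes "finite A" "finite B"
  shows "card {(a, b). a \<in> A \<and> b \<in> B \<and> a \<noteq> b} = card A * card B - card (A \<inter> B)"
proof -
  have "{(a, b). a \<in> A \<and> b \<in> B \<and> a \<noteq> b} = A \<times> B - (\<lambda>l. (l, l)) ` (A \<inter> B)"
    by auto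
  moreover have "card ((\<lambda>l. (l, l)) ` (A \<inter> B)) = card (A \<inter> B)"
    by (rule card_image) (auto simp: inj_on_def)
  moreover have "(\<lambda>l. (l, l)) ` (A \<inter> B) \<subseteq> A \<times> B"
    by auto
  ultimately show ?thesis
    using assms by (simp add: card_Diff_subset card_cartesian_product finite_subset)
qed

lemma sum_PiE_iid_same_index:
  fixes X :: "('a::finite \<times> 'b::finite) pmf"
  assumes "finite I" "l \<in> I"
  shows "(\<Sum>s\<in>PiE I (\<lambda>_. UNIV). (\<Prod>k\<in>I. pmf X (s k)) * g (fst (s l)) (snd (s l)))
       = (\<Sum>a\<in>UNIV. \<Sum>b\<in>UNIV. pmf X (a, b) * g a b)"
  using sum_PiE_prod_pmf_component[OF assms, of "\<lambda>_. X" "case_prod g"]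
  by (simp add: case_prod_beta' UNIV_Times_UNIV[symmetric] sum.cartesian_product del: UNIV_Times_UNIV)

lemma sum_PiE_iid_distinct_indices:
  fixes X :: "('a::finite \<times> 'b::finite) pmf"
  assumes "finite I" "i \<in> I" "j \<in> I" "i \<noteq> j"
  shows "(\<Sum>s\<in>PiE I (\<lambda>_. UNIV). (\<Prod>k\<in>I. pmf X (s k)) * g (fst (s i)) (snd (s j)))
       = (\<Sum>a\<in>UNIV. \<Sum>b\<in>UNIV. pA X a * pB X b * g a b)"
proof -
  have "(\<Sum>s\<in>PiE I (\<lambda>_. UNIV). (\<Prod>k\<in>I. pmf X (s k)) * g (fst (s i)) (snd (s j)))
      = (\<Sum>x\<in>UNIV. pmf X x * (\<Sum>y\<in>UNIV. pmf X y * g (fst x) (snd y)))"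
    using sum_PiE_prod_pmf_two_components[OF assms, of "\<lambda>_. X" "\<lambda>x y. g (fst x) (snd y)"]
    by (simp add: sum_distrib_left mult.assoc)
  also have "\<dots> = (\<Sum>x\<in>UNIV. pmf X x * (\<Sum>b\<in>UNIV. pB X b * g (fst x) b))"
    by (simp add: sum_pmf_comp_eq_map_pmf pB_def)
  also have "\<dots> = (\<Sum>a\<in>UNIV. pA X a * (\<Sum>b\<in>UNIV. pB X b * g a b))"
    using sum_pmf_comp_eq_map_pmf[of X "\<lambda>a. \<Sum>b\<in>UNIV. pB X b * g a b" fst] by (simp add: pA_def)
  finally show ?thesis
    by (simp add: sum_distrib_left mult.assoc)
qed

lemma sum_ereal_neq_MInfty: "(\<And>x. x \<in> A \<Longrightarrow> g x \<noteq> -\<infinity>) \<Longrightarrow> sum g A \<noteq> (-\<infinity> :: ereal)"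
  by (induction A rule: infinite_finite_induct) auto

lemma sum_ereal_eq_MInfty:
  fixes g :: "'a \<Rightarrow> ereal"
  assumes "finite A" "x \<in> A" "g x = -\<infinity>" "\<And>y. y \<in> A \<Longrightarrow> g y \<noteq> \<infinity>"
  shows "sum g A = -\<infinity>"
proof -
  have "sum g A = g x + sum g (A - {x})"
    using assms(1,2) by (rule sum.remove)
  moreover have "sum g (A - {x}) \<noteq> \<infinity>"
    using assms by (simp add: sum_Pinfty)
  ultimately show ?thesis
    using assms(3) by simp
qed

lemma MIG_neq_PInfty: "MIG f R hA hB LA LB s \<noteq> \<infinity>"
proof -
  let ?T = "\<Sum>(la, lb)\<in>{(la, lb). la \<in> LA \<and> lb \<in> LB \<and> la \<noteq> lb}.
              fstar f (R (hA (fst (s la))) (hB (snd (s lb))))"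
  have "?T \<noteq> -\<infinity>"
    by (intro sum_ereal_neq_MInfty) (auto simp: fstar_neq_MInfty)
  define P where "P = ereal (1 / real (card LA * card LB - card (LA \<inter> LB))) * ?T"
  have "P \<noteq> -\<infinity>"
    using \<open>?T \<noteq> -\<infinity>\<close> by (simp add: P_def)
  then show ?thesis
    unfolding MIG_def P_def[symmetric] by (cases P) auto
qed

lemma MIG_eq_MInfty:
  assumes "finite LA" "finite LB" "la \<in> LA" "lb \<in> LB" "la \<noteq> lb"
    and "fstar f (R (hA (fst (s la))) (hB (snd (s lb)))) = \<infinity>"
  shows "MIG f R hA hB LA LB s = -\<infinity>"
proof -
  define Pairs where "Pairs = {(la, lb). la \<in> LA \<and> lb \<in> LB \<and> la \<noteq> lb}"
  have "finite Pairs" "(la, lb) \<in> Pairs"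
    using assms by (auto simp: Pairs_def intro: finite_subset[of _ "LA \<times> LB"])
  then have "card Pairs > 0"
    by (auto simp: card_gt_0_iff)
  moreover have "(\<Sum>(la, lb)\<in>Pairs. fstar f (R (hA (fst (s la))) (hB (snd (s lb))))) = \<infinity>"
    using \<open>finite Pairs\<close> \<open>(la, lb) \<in> Pairs\<close> assms(6)
    by (auto simp: sum_Pinfty intro!: bexI[of _ "(la, lb)"])
  ultimately show ?thesis
    unfolding MIG_def Pairs_def[symmetric] card_off_diagonal[OF assms(1,2), folded Pairs_def, symmetric]
    by simp
qed

lemma expected_MIG_eq_ereal:
  fixes X :: "('a::finite \<times> 'b::finite) pmf" and F :: "'a \<Rightarrow> 'b \<Rightarrow> real"
    and LA LB :: "'l set"
  assumes F: "\<And>a b. fstar f (R (hA a) (hB b)) = ereal (F a b)"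
    and "finite LA" "finite LB" "LA \<inter> LB \<noteq> {}" "\<exists>la\<in>LA. \<exists>lb\<in>LB. la \<noteq> lb"
  shows "expected_MIG f X R hA hB LA LB =
           ereal ((\<Sum>a\<in>UNIV. \<Sum>b\<in>UNIV. pmf X (a, b) * R (hA a) (hB b))
                  - (\<Sum>a\<in>UNIV. \<Sum>b\<in>UNIV. pA X a * pB X b * F a b))"
proof -
  define I where "I = LA \<union> LB"
  define S where "S = PiE I (\<lambda>_. UNIV :: ('a \<times> 'b) set)"
  define w where "w s = (\<Prod>l\<in>I. pmf X (s l))" for s :: "'l \<Rightarrow> 'a \<times> 'b"
  define Pairs where "Pairs = {(la, lb). la \<in> LA \<and> lb \<in> LB \<and> la \<noteq> lb}"
  define joint where "joint s = 1 / real (card (LA \<inter> LB)) *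
                        (\<Sum>l\<in>LA \<inter> LB. R (hA (fst (s l))) (hB (snd (s l))))" for s :: "'l \<Rightarrow> 'a \<times> 'b"
  define cross where "cross s = 1 / real (card Pairs) *
                        (\<Sum>(la, lb)\<in>Pairs. F (fst (s la)) (snd (s lb)))" for s :: "'l \<Rightarrow> 'a \<times> 'b"
  have "finite I" "finite Pairs" "Pairs \<noteq> {}" "finite (LA \<inter> LB)"
    using assms by (auto simp: I_def Pairs_def intro: finite_subset[of _ "LA \<times> LB"])
  have "MIG f R hA hB LA LB s = ereal (joint s - cross s)" for s
    unfolding MIG_def Pairs_def[symmetric] card_off_diagonal[OF assms(2,3), folded Pairs_def, symmetric]
    by (simp add: joint_def cross_def F case_prod_beta')
  then have "expected_MIG f X R hA hB LA LB = ereal ((\<Sum>s\<in>S. w s * joint s) - (\<Sum>s\<in>S. w s * cross s))"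
    by (simp add: expected_MIG_def S_def I_def w_def right_diff_distrib sum_subtractf)
  also have "(\<Sum>s\<in>S. w s * joint s) = (\<Sum>a\<in>UNIV. \<Sum>b\<in>UNIV. pmf X (a, b) * R (hA a) (hB b))"
    unfolding joint_def using \<open>finite (LA \<inter> LB)\<close> assms(4)
  proof (intro sum_weighted_average_const)
    fix l
    assume "l \<in> LA \<inter> LB"
    then show "(\<Sum>s\<in>S. w s * R (hA (fst (s l))) (hB (snd (s l))))
             = (\<Sum>a\<in>UNIV. \<Sum>b\<in>UNIV. pmf X (a, b) * R (hA a) (hB b))"
      using sum_PiE_iid_same_index[of I l X "\<lambda>a b. R (hA a) (hB b)"] \<open>finite I\<close>
      by (simp add: S_def w_def I_def)
  qed
  also have "(\<Sum>s\<in>S. w s * cross s) = (\<Sum>a\<in>UNIV. \<Sum>b\<in>UNIV. pA X a * pB X b * F a b)"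
    unfolding cross_def using \<open>finite I\<close> \<open>finite Pairs\<close> \<open>Pairs \<noteq> {}\<close>
    by (intro sum_weighted_average_const)
       (auto simp: S_def w_def I_def Pairs_def sum_PiE_iid_distinct_indices)
  finally show ?thesis .
qed

lemma expected_MIG_eq_MInfty:
  fixes X :: "('a::finite \<times> 'b::finite) pmf" and LA LB :: "'l set"
  assumes "fstar f (R (hA a) (hB b)) = \<infinity>"
    and "pA X a > 0" "pB X b > 0" "finite LA" "finite LB" "\<exists>la\<in>LA. \<exists>lb\<in>LB. la \<noteq> lb"
  shows "expected_MIG f X R hA hB LA LB = -\<infinity>"
proof -
  define I where "I = LA \<union> LB"
  define w where "w s = (\<Prod>l\<in>I. pmf X (s l))" for s :: "'l \<Rightarrow> 'a \<times> 'b"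
  obtain la lb where "la \<in> LA" "lb \<in> LB" "la \<noteq> lb"
    using assms by auto
  obtain x where "x \<in> set_pmf X" "fst x = a"
    using \<open>pA X a > 0\<close> by (auto simp: pA_def pmf_positive_iff)
  obtain y where "y \<in> set_pmf X" "snd y = b"
    using \<open>pB X b > 0\<close> by (auto simp: pB_def pmf_positive_iff)
  obtain z where "z \<in> set_pmf X"
    using set_pmf_not_empty by fast
  define s0 where "s0 l = (if l \<in> I then if l = la then x else if l = lb then y else z else undefined)" for l
  have "s0 \<in> PiE I (\<lambda>_. UNIV)"
    by (auto simp: s0_def PiE_def extensional_def)
  have "w s0 > 0"
    unfolding w_def s0_def
    using \<open>x \<in> set_pmf X\<close> \<open>y \<in> set_pmf X\<close> \<open>z \<in> set_pmf X\<close> by (intro prod_pos) (auto simp: pmf_positive)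
  moreover have "MIG f R hA hB LA LB s0 = -\<infinity>"
    using assms \<open>la \<in> LA\<close> \<open>lb \<in> LB\<close> \<open>la \<noteq> lb\<close> \<open>fst x = a\<close> \<open>snd y = b\<close>
    by (intro MIG_eq_MInfty) (auto simp: s0_def I_def)
  moreover have "ereal (w s) * MIG f R hA hB LA LB s \<noteq> \<infinity>" for s
    using MIG_neq_PInfty[of f R hA hB LA LB s] prod_nonneg[of I "\<lambda>l. pmf X (s l)"]
    by (auto simp: w_def)
  ultimately have "(\<Sum>s\<in>PiE I (\<lambda>_. UNIV). ereal (w s) * MIG f R hA hB LA LB s) = -\<infinity>"
    using \<open>s0 \<in> PiE I (\<lambda>_. UNIV)\<close> assms(4,5)
    by (intro sum_ereal_eq_MInfty) (auto simp: I_def finite_PiE)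
  then show ?thesis
    unfolding expected_MIG_def I_def w_def .
qed

lemma fMI_variational_bound:
  fixes X :: "('a::finite \<times> 'b::finite) pmf" and r F :: "'a \<Rightarrow> 'b \<Rightarrow> real"
  assumes F: "\<And>a b. fstar f (r a b) = ereal (F a b)"
    and margA: "\<And>a. pA X a > 0" and margB: "\<And>b. pB X b > 0"
  defines "gain \<equiv> (\<Sum>a\<in>UNIV. \<Sum>b\<in>UNIV. pmf X (a, b) * r a b)
                  - (\<Sum>a\<in>UNIV. \<Sum>b\<in>UNIV. pA X a * pB X b * F a b)"
  shows "gain \<le> fMI f X"
    and "gain = fMI f X \<longleftrightarrow> (\<forall>a b. r a b \<in> subdiff f (Kratio X a b))"
proof -
  define K where "K = Kratio X"
  define gap where "gap a b = pA X a * pB X b * (F a b - (K a b * r a b - f (K a b)))" for a b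
  have K_nonneg: "K a b \<ge> 0" for a b
    using margA[of a] margB[of b] by (simp add: K_def Kratio_def)
  have gap_nonneg: "gap a b \<ge> 0" for a b
    using fenchel_young[of "K a b" "r a b" f] K_nonneg[of a b] F[of a b] margA[of a] margB[of b]
    by (simp add: gap_def)
  have gap_eq_0_iff: "gap a b = 0 \<longleftrightarrow> r a b \<in> subdiff f (K a b)" for a b
    using fstar_eq_iff_subdiff[of "K a b" f "r a b"] K_nonneg[of a b] F[of a b] margA[of a] margB[of b]
    by (auto simp: gap_def)
  have "pmf X (a, b) = pA X a * pB X b * K a b" for a b
    using margA[of a] margB[of b] by (simp add: K_def Kratio_def)
  then have gap_sum: "fMI f X - gain = (\<Sum>a\<in>UNIV. \<Sum>b\<in>UNIV. gap a b)"
    by (simp add: fMI_def gain_def gap_def K_def[symmetric] sum_subtractf[symmetric]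
                  sum.distrib[symmetric] algebra_simps)
  show "gain \<le> fMI f X"
    using gap_sum gap_nonneg by (smt (verit) sum_nonneg)
  have "(\<Sum>a\<in>UNIV. \<Sum>b\<in>UNIV. gap a b) = 0 \<longleftrightarrow> (\<forall>a b. gap a b = 0)"
    using gap_nonneg by (simp add: sum_nonneg_eq_0_iff sum_nonneg)
  then show "gain = fMI f X \<longleftrightarrow> (\<forall>a b. r a b \<in> subdiff f (Kratio X a b))"
    using gap_sum gap_eq_0_iff by (auto simp: K_def)
qed

theorem mainTheorem3:
  fixes f :: "real \<Rightarrow> real"
    and X :: "('a::finite \<times> 'b::finite) pmf"
    and R :: "'c::finite pmf \<Rightarrow> 'c pmf \<Rightarrow> real"
    and hA :: "'a \<Rightarrow> 'c pmf" and hB :: "'b \<Rightarrow> 'c pmf"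
    and LA LB :: "'l set"
  assumes conv: "convex_on {0..} f" and f1: "f 1 = 0"
    and margA: "\<And>xa. pA X xa > 0" and margB: "\<And>xb. pB X xb > 0"
    and finA: "finite LA" and finB: "finite LB"
    and inter: "LA \<inter> LB \<noteq> {}"
    and pair: "\<exists>la\<in>LA. \<exists>lb\<in>LB. la \<noteq> lb"
  shows "expected_MIG f X R hA hB LA LB =
           ereal (\<Sum>xa\<in>UNIV. \<Sum>xb\<in>UNIV. pmf X (xa, xb) * R (hA xa) (hB xb))
           - (\<Sum>xa\<in>UNIV. \<Sum>xb\<in>UNIV. ereal (pA X xa * pB X xb) * fstar f (R (hA xa) (hB xb)))
       \<and> expected_MIG f X R hA hB LA LB \<le> ereal (fMI f X)
       \<and> (expected_MIG f X R hA hB LA LB = ereal (fMI f X) \<longleftrightarrow>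
            (\<forall>xa xb. R (hA xa) (hB xb) \<in> subdiff f (Kratio X xa xb)))"
proof (cases "\<forall>a b. fstar f (R (hA a) (hB b)) \<noteq> \<infinity>")
  case True
  define F where "F a b = real_of_ereal (fstar f (R (hA a) (hB b)))" for a b
  have F: "fstar f (R (hA a) (hB b)) = ereal (F a b)" for a b
    using True fstar_neq_MInfty[of f "R (hA a) (hB b)"] by (cases "fstar f (R (hA a) (hB b))") (auto simp: F_def)
  show ?thesis
    using expected_MIG_eq_ereal[where X = X and R = R and hA = hA and hB = hB, OF F finA finB inter pair]
      fMI_variational_bound[where r = "\<lambda>a b. R (hA a) (hB b)", OF F margA margB]
    by (simp add: F sum_ereal)
next
  case False
  then obtain a b where infinite: "fstar f (R (hA a) (hB b)) = \<infinity>"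
    by auto
  then have "(\<Sum>xa\<in>UNIV. \<Sum>xb\<in>UNIV. ereal (pA X xa * pB X xb) * fstar f (R (hA xa) (hB xb))) = \<infinity>"
    using margA[of a] margB[of b] by (simp add: sum_Pinfty) (blast intro: mult_pos_pos)
  moreover have "R (hA a) (hB b) \<notin> subdiff f (Kratio X a b)"
    using infinite fstar_eq_iff_subdiff[of "Kratio X a b" f "R (hA a) (hB b)"] margA[of a] margB[of b]
    by (auto simp: Kratio_def)
  ultimately show ?thesis
    using expected_MIG_eq_MInfty[where R = R and hA = hA and hB = hB and a = a and b = b,
            OF infinite margA margB finA finB pair] by auto
qed

end
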